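(* Let $n=2m+1$ be odd and let $\mathbf{X}=\{X_{rj}:r,j=1,\dots,n\}$ be the switch variables of the standard lightbulb process. Given $\mathbf{X}$, let $B_m$ be uniform on $\{j:X_{mj}=0\}$ and $B_{m+1}$ uniform on $\{j:X_{m+1,j}=1\}$, and let $C_m,C_{m+1}$ be symmetric Bernoulli ($P(C=0)=P(C=1)=1/2$) variables independent of each other, of $\mathbf{X}$ and of $B_m,B_{m+1}$. Define $\mathbf{V}=\{V_{rj}\}$ by $V_{rj}=X_{rj}$ for $r\notin\{m,m+1\}$; $V_{mj}=X_{mj}$ for $j\ne B_m$, $V_{m,B_m}=C_m$; $V_{m+1,j}=X_{m+1,j}$ for $j\ne B_{m+1}$, $V_{m+1,B_{m+1}}=C_{m+1}$. Let $V_j=(\sum_{r=1}^nV_{rj})\bmod 2$ and $V=\sum_{j=1}^nV_j$. Then: the row vectors $(V_{r1},\dots,V_{rn})$, $r=1,\dots,n$, are mutually independent; for $r\in\{m,m+1\}$, $$\mathcal{L}(V_{r1},\dots,V_{rn})=\tfrac12\mathcal{L}(X_{m1},\dots,X_{mn})+\tfrac12\mathcal{L}(X_{m+1,1},\dots,X_{m+1,n});$$ $P(V_j=1)=1/2$ for all $j$; $EV=n/2$; and $\mathrm{Var}(V)=\sigma_V^2:=\frac n4(1-\overline{\lambda}_{n,2,\mathbf{n}})+\frac{n^2}{4}\overline{\lambda}_{n,2,\mathbf{n}}$.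
   Context: Standard lightbulb process: $n$ bulbs, all initially off, $n$ stages; at stage $r=1,\dots,n$ a uniformly random subset of exactly $r$ bulbs is toggled, independently across stages; $X_{rj}\in\{0,1\}$ is $1$ iff bulb $j$ is toggled at stage $r$. With $(n)_t=n(n-1)\cdots(n-t+1)$, define $\lambda_{n,b,s}=\sum_{t=0}^b\binom bt(-2)^t\frac{(s)_t}{(n)_t}$. For $n=2m+1$, $\overline{\lambda}_{n,2,\mathbf{n}}=\Big(\prod_{s\in\{1,\dots,n\}\setminus\{m,m+1\}}\lambda_{n,2,s}\Big)\Big(\tfrac12(\lambda_{n,2,m}+\lambda_{n,2,m+1})\Big)^2$. $\mathcal{L}$ denotes law; a combination $\frac12\mathcal{L}_1+\frac12\mathcal{L}_2$ is the equal mixture. *)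

theory Defs
  imports "HOL-Probability.Probability"
begin

text \<open>Rows of the switch matrix are encoded by the set of toggled bulbs:
  X_rj = 1 iff j is in the row-r set.  Bulbs and stages are indexed by 1..n.\<close>

definition row_pmf :: "nat \<Rightarrow> nat \<Rightarrow> nat set pmf" where
  "row_pmf n r = pmf_of_set {S. S \<subseteq> {1..n} \<and> card S = r}"

definition X_pmf :: "nat \<Rightarrow> (nat \<Rightarrow> nat set) pmf" where
  "X_pmf n = Pi_pmf {1..n} {} (row_pmf n)"

definition V_pmf :: "nat \<Rightarrow> nat \<Rightarrow> (nat \<Rightarrow> nat set) pmf" where
  "V_pmf n m =
    bind_pmf (X_pmf n) (\<lambda>X.
    bind_pmf (pmf_of_set ({1..n} - X m)) (\<lambda>Bm.
    bind_pmf (pmf_of_set (X (m+1))) (\<lambda>Bm1.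
    bind_pmf (bernoulli_pmf (1/2)) (\<lambda>Cm.
    bind_pmf (bernoulli_pmf (1/2)) (\<lambda>Cm1.
    return_pmf (X(m := (X m - {Bm}) \<union> (if Cm then {Bm} else {}),
                  m+1 := (X (m+1) - {Bm1}) \<union> (if Cm1 then {Bm1} else {}))))))))"

definition Vcol :: "nat \<Rightarrow> (nat \<Rightarrow> nat set) \<Rightarrow> nat \<Rightarrow> nat" where
  "Vcol n V j = (\<Sum>r=1..n. (if j \<in> V r then 1 else 0)) mod 2"

definition Vtot :: "nat \<Rightarrow> (nat \<Rightarrow> nat set) \<Rightarrow> nat" where
  "Vtot n V = (\<Sum>j=1..n. Vcol n V j)"

definition ffall :: "nat \<Rightarrow> nat \<Rightarrow> real" where
  "ffall s t = (\<Prod>i<t. real s - real i)"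

definition lam :: "nat \<Rightarrow> nat \<Rightarrow> nat \<Rightarrow> real" where
  "lam n b s = (\<Sum>t=0..b. real (b choose t) * (-2) ^ t * ffall s t / ffall n t)"

definition lam_bar :: "nat \<Rightarrow> nat \<Rightarrow> real" where
  "lam_bar n m = (\<Prod>s\<in>{1..n} - {m, m+1}. lam n 2 s) * ((lam n 2 m + lam n 2 (m+1)) / 2) ^ 2"

end

theory Submission
  imports Defs
begin

(* Only rows m and m+1 of X are modified, each by a kernel acting on that row alone, so V is again
   a product of independent rows. Adding a uniformly random non-member to a uniform m-subset gives a
   uniform (m+1)-subset, and deleting a uniformly random member of a uniform (m+1)-subset gives a
   uniform m-subset; re-drawing the chosen bulb by a fair coin therefore turns both rows into the
   equal mixture of the two uniform laws.
   For the moments write V_j = (1 - s_j)/2 with the column sign s_j = prod_r (-1)^(V_rj). By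
   independence E(s_j) and E(s_j s_k) factor over the rows; by inclusion-exclusion a uniform
   r-subset contributes lambda_{n,b,r} for b distinct bulbs, and the mixed rows contribute
   (lambda_{n,1,m} + lambda_{n,1,m+1})/2 = 0 to E(s_j) because n = 2m+1. Expanding (sum_j s_j)^2
   then gives the variance. *)

abbreviation ksubsets :: "nat \<Rightarrow> nat \<Rightarrow> nat set set" where
  "ksubsets n r \<equiv> {S. S \<subseteq> {1..n} \<and> card S = r}"

lemma finite_ksubsets: "finite (ksubsets n r)"
  by (rule finite_subset[of _ "Pow {1..n}"]) auto

lemma card_ksubsets: "card (ksubsets n r) = n choose r"
  using n_subsets[of "{1..n}" r] by simp

lemma ksubsets_nonempty: "r \<le> n \<Longrightarrow> ksubsets n r \<noteq> {}"
  using card_ksubsets[of n r] by (metis card.empty binomial_eq_0_iff not_le)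

lemma set_pmf_row_pmf: "r \<le> n \<Longrightarrow> set_pmf (row_pmf n r) = ksubsets n r"
  unfolding row_pmf_def using finite_ksubsets ksubsets_nonempty by simp

lemma pmf_of_set_Sigma:
  assumes "finite I" "I \<noteq> {}"
    and "\<And>i. i \<in> I \<Longrightarrow> finite (J i) \<and> J i \<noteq> {} \<and> card (J i) = c"
  shows "pmf_of_set (Sigma I J) = pmf_of_set I \<bind> (\<lambda>i. map_pmf (Pair i) (pmf_of_set (J i)))"
proof -
  have card: "card (Pair i ` J i) = c" if "i \<in> I" for i
    using assms(3)[OF that] by (simp add: card_image inj_on_def)
  have "Sigma I J = (\<Union>i\<in>I. Pair i ` J i)" by auto
  also have "pmf_of_set \<dots> = pmf_of_set I \<bind> (\<lambda>i. pmf_of_set (Pair i ` J i))"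
  proof (rule pmf_of_set_UN[where n = c])
    show "finite (\<Union>i\<in>I. Pair i ` J i)" using assms(1,3) by simp
    show "disjoint_family_on (\<lambda>i. Pair i ` J i) I" by (auto simp: disjoint_family_on_def)
  qed (use assms(2,3) card in simp_all)
  also have "\<dots> = pmf_of_set I \<bind> (\<lambda>i. map_pmf (Pair i) (pmf_of_set (J i)))"
  proof (rule bind_pmf_cong[OF refl])
    fix i assume "i \<in> set_pmf (pmf_of_set I)"
    then have "i \<in> I" using assms(1,2) by simp
    then show "pmf_of_set (Pair i ` J i) = map_pmf (Pair i) (pmf_of_set (J i))"
      using assms(3) by (intro map_pmf_of_set_inj[symmetric]) (simp_all add: inj_on_def)
  qed
  finally show ?thesis .
qed

lemma map_fst_bind_Pair: "map_pmf fst (p \<bind> (\<lambda>x. map_pmf (Pair x) (q x))) = p"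
  by (simp add: map_bind_pmf pmf.map_comp o_def bind_return_pmf')

lemma finite_of_mem_ksubsets: "S \<in> ksubsets n r \<Longrightarrow> finite S"
  using finite_subset[of S "{1..n}"] by simp

lemma card_complement_ksubset:
  assumes "y \<in> ksubsets n r"
  shows "card ({1..n} - y) = n - r"
proof -
  have "finite y" "y \<subseteq> {1..n}" "card y = r"
    using assms finite_of_mem_ksubsets[OF assms] by auto
  then show ?thesis by (simp add: card_Diff_subset)
qed

lemma complement_ksubset_nonempty: "y \<in> ksubsets n r \<Longrightarrow> r < n \<Longrightarrow> {1..n} - y \<noteq> {}"
  using card_complement_ksubset[of y n r] by (metis card.empty zero_less_diff less_irrefl)

lemma bij_betw_insert_nonmember:
  "bij_betw (\<lambda>(y, b). (insert b y, b))
     (Sigma (ksubsets n r) (\<lambda>y. {1..n} - y)) (Sigma (ksubsets n (r+1)) (\<lambda>S. S))"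
proof (rule bij_betw_byWitness[where f' = "\<lambda>(S, b). (S - {b}, b)"])
  show "(\<lambda>(y, b). (insert b y, b)) ` Sigma (ksubsets n r) (\<lambda>y. {1..n} - y)
      \<subseteq> Sigma (ksubsets n (r+1)) (\<lambda>S. S)"
    by (auto intro!: card_insert_disjoint finite_of_mem_ksubsets)
  show "(\<lambda>(S, b). (S - {b}, b)) ` Sigma (ksubsets n (r+1)) (\<lambda>S. S)
      \<subseteq> Sigma (ksubsets n r) (\<lambda>y. {1..n} - y)"
    by auto
qed (simp_all add: insert_absorb)

lemma bij_betw_remove_member:
  "bij_betw (\<lambda>(S, b). (S - {b}, b))
     (Sigma (ksubsets n (r+1)) (\<lambda>S. S)) (Sigma (ksubsets n r) (\<lambda>y. {1..n} - y))"
proof (rule bij_betw_byWitness[where f' = "\<lambda>(y, b). (insert b y, b)"])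
  show "(\<lambda>(y, b). (insert b y, b)) ` Sigma (ksubsets n r) (\<lambda>y. {1..n} - y)
      \<subseteq> Sigma (ksubsets n (r+1)) (\<lambda>S. S)"
    by (auto intro!: card_insert_disjoint finite_of_mem_ksubsets)
  show "(\<lambda>(S, b). (S - {b}, b)) ` Sigma (ksubsets n (r+1)) (\<lambda>S. S)
      \<subseteq> Sigma (ksubsets n r) (\<lambda>y. {1..n} - y)"
    by auto
qed (simp_all add: insert_absorb)

lemma pmf_of_set_Sigma_ksubsets_nonmember:
  assumes "r < n"
  shows "pmf_of_set (Sigma (ksubsets n r) (\<lambda>y. {1..n} - y))
           = row_pmf n r \<bind> (\<lambda>y. map_pmf (Pair y) (pmf_of_set ({1..n} - y)))"
  unfolding row_pmf_def
proof (rule pmf_of_set_Sigma[where c = "n - r"])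
  fix y assume y: "y \<in> ksubsets n r"
  show "finite ({1..n} - y) \<and> {1..n} - y \<noteq> {} \<and> card ({1..n} - y) = n - r"
    using card_complement_ksubset[OF y] complement_ksubset_nonempty[OF y assms] by simp
qed (use assms ksubsets_nonempty[of r n] in \<open>simp_all add: finite_ksubsets\<close>)

lemma pmf_of_set_Sigma_ksubsets_member:
  assumes "r < n"
  shows "pmf_of_set (Sigma (ksubsets n (r+1)) (\<lambda>S. S))
           = row_pmf n (r+1) \<bind> (\<lambda>S. map_pmf (Pair S) (pmf_of_set S))"
  unfolding row_pmf_def
proof (rule pmf_of_set_Sigma[where c = "r + 1"])
  fix S assume S: "S \<in> ksubsets n (r+1)"
  then have "finite S" by (rule finite_of_mem_ksubsets)
  with S show "finite S \<and> S \<noteq> {} \<and> card S = r + 1" by auto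
qed (use assms ksubsets_nonempty[of "r+1" n] in \<open>simp_all add: finite_ksubsets\<close>)

(* Both laws are marginals of the uniform law on pairs (S, b) with b \<in> S and card S = r + 1. *)
lemma row_pmf_insert_nonmember:
  assumes "r < n"
  shows "row_pmf n r \<bind> (\<lambda>y. map_pmf (\<lambda>b. insert b y) (pmf_of_set ({1..n} - y))) = row_pmf n (r+1)"
proof -
  let ?P = "Sigma (ksubsets n r) (\<lambda>y. {1..n} - y)"
  have fin: "finite ?P" by (intro finite_SigmaI finite_ksubsets) simp
  obtain y where y: "y \<in> ksubsets n r" using ksubsets_nonempty[of r n] assms by auto
  with assms obtain b where "b \<in> {1..n} - y"
    using complement_ksubset_nonempty by blast
  with y have ne: "?P \<noteq> {}" by blast
  have "row_pmf n r \<bind> (\<lambda>y. map_pmf (\<lambda>b. insert b y) (pmf_of_set ({1..n} - y)))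
      = map_pmf (fst \<circ> (\<lambda>(y, b). (insert b y, b)))
          (row_pmf n r \<bind> (\<lambda>y. map_pmf (Pair y) (pmf_of_set ({1..n} - y))))"
    by (simp add: map_bind_pmf pmf.map_comp o_def)
  also have "\<dots> = map_pmf (fst \<circ> (\<lambda>(y, b). (insert b y, b))) (pmf_of_set ?P)"
    by (simp only: pmf_of_set_Sigma_ksubsets_nonmember[OF assms])
  also have "\<dots> = map_pmf fst (pmf_of_set (Sigma (ksubsets n (r+1)) (\<lambda>S. S)))"
    by (subst pmf.map_comp[symmetric]) (simp only: map_pmf_of_set_bij_betw[OF bij_betw_insert_nonmember ne fin])
  finally show ?thesis
    by (simp only: pmf_of_set_Sigma_ksubsets_member[OF assms] map_fst_bind_Pair)
qed

lemma row_pmf_remove_member: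
  assumes "r < n"
  shows "row_pmf n (r+1) \<bind> (\<lambda>S. map_pmf (\<lambda>b. S - {b}) (pmf_of_set S)) = row_pmf n r"
proof -
  let ?M = "Sigma (ksubsets n (r+1)) (\<lambda>S. S)"
  have fin: "finite ?M" by (intro finite_SigmaI finite_ksubsets finite_of_mem_ksubsets)
  obtain S where S: "S \<in> ksubsets n (r+1)" using ksubsets_nonempty[of "r+1" n] assms by auto
  then obtain b where "b \<in> S" by fastforce
  with S have ne: "?M \<noteq> {}" by blast
  have "row_pmf n (r+1) \<bind> (\<lambda>S. map_pmf (\<lambda>b. S - {b}) (pmf_of_set S))
      = map_pmf (fst \<circ> (\<lambda>(S, b). (S - {b}, b)))
          (row_pmf n (r+1) \<bind> (\<lambda>S. map_pmf (Pair S) (pmf_of_set S)))"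
    by (simp add: map_bind_pmf pmf.map_comp o_def)
  also have "\<dots> = map_pmf (fst \<circ> (\<lambda>(S, b). (S - {b}, b))) (pmf_of_set ?M)"
    by (simp only: pmf_of_set_Sigma_ksubsets_member[OF assms])
  also have "\<dots> = map_pmf fst (pmf_of_set (Sigma (ksubsets n r) (\<lambda>y. {1..n} - y)))"
    by (subst pmf.map_comp[symmetric]) (simp only: map_pmf_of_set_bij_betw[OF bij_betw_remove_member ne fin])
  finally show ?thesis
    by (simp only: pmf_of_set_Sigma_ksubsets_nonmember[OF assms] map_fst_bind_Pair)
qed

(* The kernel V_pmf applies to a row y: the bulb b is uniform on U (the complement of row m, resp.
   row m+1 itself) and its membership is re-drawn by a fair coin. *)
definition resample :: "'a set \<Rightarrow> 'a set \<Rightarrow> 'a set pmf" where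
  "resample U y = pmf_of_set U \<bind> (\<lambda>b.
     map_pmf (\<lambda>c. (y - {b}) \<union> (if c then {b} else {})) (bernoulli_pmf (1/2)))"

definition row_mix_pmf :: "nat \<Rightarrow> nat \<Rightarrow> nat set pmf" where
  "row_mix_pmf n m = bernoulli_pmf (1/2) \<bind> (\<lambda>c. row_pmf n (if c then m+1 else m))"

lemma resample_coin_first:
  "resample U y = bernoulli_pmf (1/2) \<bind>
     (\<lambda>c. map_pmf (\<lambda>b. if c then insert b y else y - {b}) (pmf_of_set U))"
  unfolding resample_def map_pmf_def
  by (subst bind_commute_pmf) (auto intro!: bind_pmf_cong)

lemma row_pmf_bind_resample_nonmember:
  assumes "m < n"
  shows "row_pmf n m \<bind> (\<lambda>y. resample ({1..n} - y) y) = row_mix_pmf n m"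
proof -
  have "row_pmf n m \<bind> (\<lambda>y. resample ({1..n} - y) y)
      = row_pmf n m \<bind> (\<lambda>y. bernoulli_pmf (1/2) \<bind> (\<lambda>c.
          if c then map_pmf (\<lambda>b. insert b y) (pmf_of_set ({1..n} - y)) else return_pmf y))"
    unfolding resample_coin_first
  proof (intro bind_pmf_cong refl)
    fix y c assume "y \<in> set_pmf (row_pmf n m)"
    with assms have "{1..n} - y \<noteq> {}"
      by (intro complement_ksubset_nonempty) (simp_all add: set_pmf_row_pmf)
    then have "map_pmf (\<lambda>b. y - {b}) (pmf_of_set ({1..n} - y))
        = map_pmf (\<lambda>_. y) (pmf_of_set ({1..n} - y))"
      by (intro map_pmf_cong) auto
    then have "map_pmf (\<lambda>b. y - {b}) (pmf_of_set ({1..n} - y)) = return_pmf y"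
      by simp
    then show "map_pmf (\<lambda>b. if c then insert b y else y - {b}) (pmf_of_set ({1..n} - y))
        = (if c then map_pmf (\<lambda>b. insert b y) (pmf_of_set ({1..n} - y)) else return_pmf y)"
      by simp
  qed
  also have "\<dots> = bernoulli_pmf (1/2) \<bind> (\<lambda>c. row_pmf n (if c then m+1 else m))"
    using row_pmf_insert_nonmember[OF assms]
    by (subst bind_commute_pmf) (auto intro!: bind_pmf_cong simp: bind_return_pmf')
  finally show ?thesis unfolding row_mix_pmf_def .
qed

lemma row_pmf_bind_resample_member:
  assumes "m < n"
  shows "row_pmf n (m+1) \<bind> (\<lambda>z. resample z z) = row_mix_pmf n m"
proof -
  have "row_pmf n (m+1) \<bind> (\<lambda>z. resample z z)
      = row_pmf n (m+1) \<bind> (\<lambda>z. bernoulli_pmf (1/2) \<bind> (\<lambda>c.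
          if c then return_pmf z else map_pmf (\<lambda>b. z - {b}) (pmf_of_set z)))"
    unfolding resample_coin_first
  proof (intro bind_pmf_cong refl)
    fix z c assume "z \<in> set_pmf (row_pmf n (m+1))"
    with assms have z: "z \<in> ksubsets n (m+1)" by (simp add: set_pmf_row_pmf)
    then have "finite z" by (rule finite_of_mem_ksubsets)
    moreover from z this have "z \<noteq> {}" by auto
    ultimately have "map_pmf (\<lambda>b. insert b z) (pmf_of_set z) = map_pmf (\<lambda>_. z) (pmf_of_set z)"
      by (intro map_pmf_cong) (auto simp: insert_absorb)
    then have "map_pmf (\<lambda>b. insert b z) (pmf_of_set z) = return_pmf z"
      by simp
    then show "map_pmf (\<lambda>b. if c then insert b z else z - {b}) (pmf_of_set z)
        = (if c then return_pmf z else map_pmf (\<lambda>b. z - {b}) (pmf_of_set z))"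
      by simp
  qed
  also have "\<dots> = bernoulli_pmf (1/2) \<bind> (\<lambda>c. row_pmf n (if c then m+1 else m))"
    using row_pmf_remove_member[OF assms]
    by (subst bind_commute_pmf) (auto intro!: bind_pmf_cong simp: bind_return_pmf')
  finally show ?thesis unfolding row_mix_pmf_def .
qed

lemma Pi_pmf_bind_update:
  assumes "finite I" "a \<in> I"
  shows "Pi_pmf I d p \<bind> (\<lambda>f. K (f a) \<bind> (\<lambda>y. return_pmf (f(a := y))))
           = Pi_pmf I d (p(a := p a \<bind> K))"
proof -
  have I: "I = insert a (I - {a})" using assms(2) by blast
  have rest: "Pi_pmf (I - {a}) d (p(a := p a \<bind> K)) = Pi_pmf (I - {a}) d p"
    by (rule Pi_pmf_cong) auto
  have "Pi_pmf I d p \<bind> (\<lambda>f. K (f a) \<bind> (\<lambda>y. return_pmf (f(a := y))))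
      = p a \<bind> (\<lambda>x. Pi_pmf (I - {a}) d p \<bind> (\<lambda>f. K x \<bind> (\<lambda>y. return_pmf (f(a := y)))))"
    by (subst I, subst Pi_pmf_insert') (simp_all add: assms bind_assoc_pmf bind_return_pmf)
  also have "\<dots> = (p a \<bind> K) \<bind> (\<lambda>y. Pi_pmf (I - {a}) d p \<bind> (\<lambda>f. return_pmf (f(a := y))))"
    by (simp add: bind_assoc_pmf bind_commute_pmf[of "Pi_pmf (I - {a}) d p"])
  also have "\<dots> = Pi_pmf I d (p(a := p a \<bind> K))"
    by (subst (2) I, subst Pi_pmf_insert') (simp_all add: assms rest)
  finally show ?thesis .
qed

definition V_row_pmf :: "nat \<Rightarrow> nat \<Rightarrow> nat \<Rightarrow> nat set pmf" where
  "V_row_pmf n m = (row_pmf n)(m := row_mix_pmf n m, m+1 := row_mix_pmf n m)"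

lemma V_pmf_eq_Pi_pmf:
  assumes "1 \<le> m" "m < n"
  shows "V_pmf n m = Pi_pmf {1..n} {} (V_row_pmf n m)"
proof -
  let ?K1 = "\<lambda>y. resample ({1..n} - y) y" and ?K2 = "\<lambda>z. resample z z"
  have "V_pmf n m = X_pmf n \<bind> (\<lambda>f. ?K1 (f m) \<bind> (\<lambda>y. ?K2 (f (m+1)) \<bind>
                      (\<lambda>z. return_pmf (f(m := y, m+1 := z)))))"
    unfolding V_pmf_def resample_def map_pmf_def
    by (simp add: bind_assoc_pmf bind_return_pmf) (intro bind_pmf_cong refl bind_commute_pmf)
  also have "\<dots> = (X_pmf n \<bind> (\<lambda>f. ?K1 (f m) \<bind> (\<lambda>y. return_pmf (f(m := y)))))
                   \<bind> (\<lambda>g. ?K2 (g (m+1)) \<bind> (\<lambda>z. return_pmf (g(m+1 := z))))"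
    by (simp add: bind_assoc_pmf bind_return_pmf)
  also have "\<dots> = Pi_pmf {1..n} {}
      ((row_pmf n)(m := row_pmf n m \<bind> ?K1, m+1 := row_pmf n (m+1) \<bind> ?K2))"
    unfolding X_pmf_def using assms
    by (subst Pi_pmf_bind_update, simp_all)+
  also have "\<dots> = Pi_pmf {1..n} {} (V_row_pmf n m)"
    unfolding V_row_pmf_def
    using row_pmf_bind_resample_nonmember[OF assms(2)] row_pmf_bind_resample_member[OF assms(2)]
    by simp
  finally show ?thesis .
qed

lemma card_supersets_of_card:
  assumes U: "finite U" and F: "F \<subseteq> U" "card F \<le> r"
  shows "card {S. S \<subseteq> U \<and> card S = r \<and> F \<subseteq> S} = (card U - card F) choose (r - card F)"
proof -
  have fin: "finite A" if "A \<subseteq> U" for A using U that finite_subset by blast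
  have "bij_betw (\<lambda>T. T \<union> F) {T. T \<subseteq> U - F \<and> card T = r - card F} {S. S \<subseteq> U \<and> card S = r \<and> F \<subseteq> S}"
  proof (rule bij_betw_byWitness[where f' = "\<lambda>S. S - F"])
    show "(\<lambda>T. T \<union> F) ` {T. T \<subseteq> U - F \<and> card T = r - card F} \<subseteq> {S. S \<subseteq> U \<and> card S = r \<and> F \<subseteq> S}"
    proof (rule image_subsetI)
      fix T assume "T \<in> {T. T \<subseteq> U - F \<and> card T = r - card F}"
      then have T: "T \<subseteq> U - F" "card T = r - card F" by auto
      have "card (T \<union> F) = card T + card F"
        using T(1) fin[of T] fin[OF F(1)] by (intro card_Un_disjoint) auto
      with T F show "T \<union> F \<in> {S. S \<subseteq> U \<and> card S = r \<and> F \<subseteq> S}" by auto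
    qed
    show "(\<lambda>S. S - F) ` {S. S \<subseteq> U \<and> card S = r \<and> F \<subseteq> S} \<subseteq> {T. T \<subseteq> U - F \<and> card T = r - card F}"
    proof (rule image_subsetI)
      fix S assume "S \<in> {S. S \<subseteq> U \<and> card S = r \<and> F \<subseteq> S}"
      then have S: "S \<subseteq> U" "card S = r" "F \<subseteq> S" by auto
      then have "card (S - F) = r - card F" using fin[OF F(1)] by (simp add: card_Diff_subset)
      with S show "S - F \<in> {T. T \<subseteq> U - F \<and> card T = r - card F}" by auto
    qed
  qed blast+
  then have "card {S. S \<subseteq> U \<and> card S = r \<and> F \<subseteq> S} = card {T. T \<subseteq> U - F \<and> card T = r - card F}"
    by (simp add: bij_betw_same_card)
  also have "\<dots> = (card U - card F) choose (r - card F)"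
    using U F fin by (simp add: n_subsets card_Diff_subset)
  finally show ?thesis .
qed

lemma ffall_Suc: "ffall s (Suc t) = ffall s t * (real s - real t)"
  by (simp add: ffall_def)

lemma ffall_pos: "t \<le> s \<Longrightarrow> ffall s t > 0"
  unfolding ffall_def by (intro prod_pos) auto

lemma ffall_eq_0: "s < t \<Longrightarrow> ffall s t = 0"
  unfolding ffall_def by (rule prod_zero) (auto intro: bexI[where x = s])

lemma binomial_mult_ffall:
  assumes "t \<le> r" "r \<le> n"
  shows "real (n choose r) * ffall r t = real ((n - t) choose (r - t)) * ffall n t"
  using assms(1)
proof (induction t)
  case (Suc t)
  have "(r - t) * ((n - t) choose (r - t)) = (n - t) * ((n - t - 1) choose (r - t - 1))"
    using Suc.prems by (intro times_binomial_minus1_eq) simp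
  then have "real ((r - t) * ((n - t) choose (r - t)))
      = real ((n - t) * ((n - Suc t) choose (r - Suc t)))"
    by simp
  then have "real (r - t) * real ((n - t) choose (r - t))
      = real (n - t) * real ((n - Suc t) choose (r - Suc t))"
    by (simp only: of_nat_mult)
  moreover have "real (r - t) = real r - real t" "real (n - t) = real n - real t"
    using Suc.prems assms(2) by (simp_all add: of_nat_diff)
  ultimately have step: "real ((n - t) choose (r - t)) * (real r - real t)
      = real ((n - Suc t) choose (r - Suc t)) * (real n - real t)"
    by (simp add: mult.commute)
  have "real (n choose r) * ffall r (Suc t) = real (n choose r) * ffall r t * (real r - real t)"
    by (simp add: ffall_Suc)
  also have "\<dots> = real ((n - t) choose (r - t)) * (real r - real t) * ffall n t"
    using Suc by simp
  also have "\<dots> = real ((n - Suc t) choose (r - Suc t)) * ffall n (Suc t)"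
    by (simp add: step ffall_Suc)
  finally show ?case .
qed (simp add: ffall_def)

lemma prob_row_pmf_superset:
  assumes "r \<le> n" "F \<subseteq> {1..n}"
  shows "measure_pmf.prob (row_pmf n r) {S. F \<subseteq> S} = ffall r (card F) / ffall n (card F)"
proof -
  have card_F: "card F \<le> n" using assms(2) card_mono[of "{1..n}" F] by simp
  have "measure_pmf.prob (row_pmf n r) {S. F \<subseteq> S}
      = real (card {S. S \<subseteq> {1..n} \<and> card S = r \<and> F \<subseteq> S}) / real (n choose r)"
    unfolding row_pmf_def measure_pmf_of_set[OF ksubsets_nonempty[OF assms(1)] finite_ksubsets]
      card_ksubsets
    by (simp add: Int_def conj_assoc)
  also have "\<dots> = ffall r (card F) / ffall n (card F)"
  proof (cases "card F \<le> r")
    case True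
    then show ?thesis
      using assms binomial_mult_ffall[OF True assms(1)] ffall_pos[OF card_F]
      by (simp add: card_supersets_of_card field_simps)
  next
    case False
    have "{S. S \<subseteq> {1..n} \<and> card S = r \<and> F \<subseteq> S} = {}"
    proof (intro equals0I, clarify)
      fix S assume "S \<subseteq> {1..n}" "F \<subseteq> S" "r = card S"
      with False show False using card_mono[of S F] finite_subset[of S "{1..n}"] by simp
    qed
    with False show ?thesis by (simp add: ffall_eq_0)
  qed
  finally show ?thesis .
qed

lemma sum_Pow_card:
  fixes g :: "nat \<Rightarrow> 'b::comm_semiring_1"
  assumes "finite A"
  shows "(\<Sum>X\<in>Pow A. g (card X)) = (\<Sum>t=0..card A. of_nat (card A choose t) * g t)"
proof -
  have "(\<Sum>X\<in>Pow A. g (card X)) = (\<Sum>t=0..card A. \<Sum>X\<in>{X \<in> Pow A. card X = t}. g (card X))"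
    using assms by (intro sum.group[symmetric]) (auto simp: card_mono)
  also have "\<dots> = (\<Sum>t=0..card A. of_nat (card A choose t) * g t)"
  proof (rule sum.cong[OF refl])
    fix t
    have "{X \<in> Pow A. card X = t} = {X. X \<subseteq> A \<and> card X = t}" by auto
    then have "card {X \<in> Pow A. card X = t} = card A choose t"
      using assms by (simp add: n_subsets)
    moreover have "(\<Sum>X\<in>{X \<in> Pow A. card X = t}. g (card X)) = (\<Sum>X\<in>{X \<in> Pow A. card X = t}. g t)"
      by (rule sum.cong) auto
    ultimately show "(\<Sum>X\<in>{X \<in> Pow A. card X = t}. g (card X)) = of_nat (card A choose t) * g t"
      by simp
  qed
  finally show ?thesis .
qed

definition bulb_sign :: "nat \<Rightarrow> nat set \<Rightarrow> real" where
  "bulb_sign j S = (if j \<in> S then -1 else 1)"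

lemma prod_bulb_sign_expand:
  assumes "finite F"
  shows "(\<Prod>j\<in>F. bulb_sign j S) = (\<Sum>X\<in>Pow F. (-2) ^ card X * indicator {S. X \<subseteq> S} S)"
proof -
  have factor: "(\<Prod>j\<in>X. -2 * indicator {S. j \<in> S} S) = (-2) ^ card X * (indicator {S. X \<subseteq> S} S :: real)"
    if "finite X" for X :: "nat set"
  proof (cases "X \<subseteq> S")
    case True
    then have "(\<Prod>j\<in>X. -2 * indicator {S. j \<in> S} S) = (\<Prod>j\<in>X. -2 :: real)"
      by (intro prod.cong) auto
    with True show ?thesis by simp
  next
    case False
    then obtain j where "j \<in> X" "j \<notin> S" by blast
    then have "(\<Prod>j\<in>X. -2 * indicator {S. j \<in> S} S) = (0::real)"
      using \<open>finite X\<close> by (intro prod_zero bexI[of _ j]) auto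
    with False show ?thesis by simp
  qed
  have "(\<Prod>j\<in>F. bulb_sign j S) = (\<Prod>j\<in>F. -2 * indicator {S. j \<in> S} S + 1 :: real)"
    by (intro prod.cong) (auto simp: bulb_sign_def)
  also have "\<dots> = (\<Sum>X\<in>Pow F. (\<Prod>j\<in>X. -2 * indicator {S. j \<in> S} S) * (\<Prod>j\<in>F - X. 1))"
    by (rule prod_add[OF assms])
  also have "\<dots> = (\<Sum>X\<in>Pow F. (-2) ^ card X * indicator {S. X \<subseteq> S} S)"
  proof (intro sum.cong refl)
    fix X assume "X \<in> Pow F"
    then have "finite X" using assms finite_subset by auto
    then show "(\<Prod>j\<in>X. -2 * indicator {S. j \<in> S} S) * (\<Prod>j\<in>F - X. 1)
        = (-2) ^ card X * (indicator {S. X \<subseteq> S} S :: real)"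
      by (simp only: factor prod.neutral_const mult_1_right)
  qed
  finally show ?thesis .
qed

lemma finite_set_pmf_row_pmf: "r \<le> n \<Longrightarrow> finite (set_pmf (row_pmf n r))"
  by (simp add: set_pmf_row_pmf finite_ksubsets)

lemma expectation_row_pmf_prod_bulb_sign:
  assumes "r \<le> n" "F \<subseteq> {1..n}"
  shows "measure_pmf.expectation (row_pmf n r) (\<lambda>S. \<Prod>j\<in>F. bulb_sign j S) = lam n (card F) r"
proof -
  have fin: "finite F" using assms(2) finite_subset by blast
  have int: "integrable (measure_pmf (row_pmf n r)) f" for f :: "nat set \<Rightarrow> real"
    using finite_set_pmf_row_pmf[OF assms(1)] by (rule integrable_measure_pmf_finite)
  have "measure_pmf.expectation (row_pmf n r) (\<lambda>S. \<Prod>j\<in>F. bulb_sign j S)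
      = (\<Sum>X\<in>Pow F. (-2) ^ card X * measure_pmf.prob (row_pmf n r) {S. X \<subseteq> S})"
    by (simp add: prod_bulb_sign_expand[OF fin] Bochner_Integration.integral_sum[OF int])
  also have "\<dots> = (\<Sum>X\<in>Pow F. (-2) ^ card X * (ffall r (card X) / ffall n (card X)))"
    using assms by (intro sum.cong refl) (auto simp: prob_row_pmf_superset)
  also have "\<dots> = lam n (card F) r"
    unfolding sum_Pow_card[OF fin, where g = "\<lambda>t. (-2) ^ t * (ffall r t / ffall n t)"] lam_def
    by (simp add: mult.assoc)
  finally show ?thesis .
qed

lemma set_pmf_row_mix_pmf: "set_pmf (row_mix_pmf n m) \<subseteq> set_pmf (row_pmf n m) \<union> set_pmf (row_pmf n (m+1))"
  by (auto simp: row_mix_pmf_def split: if_splits)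

lemma finite_set_pmf_V_row_pmf:
  assumes "m < n" "r \<le> n"
  shows "finite (set_pmf (V_row_pmf n m r))"
  using assms finite_set_pmf_row_pmf[of m n] finite_set_pmf_row_pmf[of "m+1" n]
    finite_subset[OF set_pmf_row_mix_pmf]
  by (auto simp: V_row_pmf_def finite_set_pmf_row_pmf)

lemma expectation_row_mix_pmf:
  fixes g :: "nat set \<Rightarrow> real"
  assumes "m < n"
  shows "measure_pmf.expectation (row_mix_pmf n m) g
    = (measure_pmf.expectation (row_pmf n m) g + measure_pmf.expectation (row_pmf n (m+1)) g) / 2"
proof -
  have "measure_pmf.expectation (row_mix_pmf n m) g
      = (\<Sum>c\<in>UNIV. pmf (bernoulli_pmf (1/2)) c *\<^sub>R
           measure_pmf.expectation (row_pmf n (if c then m+1 else m)) g)"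
    unfolding row_mix_pmf_def
    by (rule pmf_expectation_bind[where A = UNIV]) (use assms finite_set_pmf_row_pmf in auto)
  then show ?thesis by (simp add: UNIV_bool)
qed

lemma expectation_Pi_pmf_prod:
  fixes g :: "'a \<Rightarrow> 'b \<Rightarrow> real"
  assumes "finite I" "\<And>i. i \<in> I \<Longrightarrow> finite (set_pmf (p i))"
  shows "measure_pmf.expectation (Pi_pmf I d p) (\<lambda>f. \<Prod>i\<in>I. g i (f i))
           = (\<Prod>i\<in>I. measure_pmf.expectation (p i) (g i))"
proof -
  let ?W = "Pi_pmf I d p"
  have "finite (set_pmf ?W)"
    using assms by (simp add: set_Pi_pmf finite_PiE_dflt)
  then have int: "integrable (measure_pmf ?W) f" for f :: "_ \<Rightarrow> real"
    by (rule integrable_measure_pmf_finite)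
  have indep: "prob_space.indep_vars (measure_pmf ?W) (\<lambda>_. borel) (\<lambda>i f. g i (f i)) I"
    by (rule prob_space.indep_vars_compose2[OF prob_space_measure_pmf indep_vars_Pi_pmf[OF assms(1)]])
       simp
  have "measure_pmf.expectation ?W (\<lambda>f. \<Prod>i\<in>I. g i (f i))
      = (\<Prod>i\<in>I. measure_pmf.expectation ?W (\<lambda>f. g i (f i)))"
    by (rule prob_space.indep_vars_lebesgue_integral[OF prob_space_measure_pmf assms(1) indep int])
  also have "\<dots> = (\<Prod>i\<in>I. measure_pmf.expectation (p i) (g i))"
  proof (rule prod.cong[OF refl])
    fix i assume "i \<in> I"
    then have "map_pmf (\<lambda>f. f i) ?W = p i" using assms(1) by (simp add: Pi_pmf_component)
    then show "measure_pmf.expectation ?W (\<lambda>f. g i (f i)) = measure_pmf.expectation (p i) (g i)"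
      by (metis integral_map_pmf)
  qed
  finally show ?thesis .
qed

definition col_sign :: "nat \<Rightarrow> (nat \<Rightarrow> nat set) \<Rightarrow> nat \<Rightarrow> real" where
  "col_sign n V j = (\<Prod>r\<in>{1..n}. bulb_sign j (V r))"

lemma Vcol_eq_col_sign: "real (Vcol n V j) = (1 - col_sign n V j) / 2"
proof -
  define N where "N = (\<Sum>r=1..n. (if j \<in> V r then 1 else 0 :: nat))"
  have "col_sign n V j = (\<Prod>r\<in>{1..n}. (-1) ^ (if j \<in> V r then 1 else 0))"
    unfolding col_sign_def by (intro prod.cong) (auto simp: bulb_sign_def)
  also have "\<dots> = (-1) ^ N" unfolding N_def by (rule power_sum[symmetric])
  finally have "col_sign n V j = (-1) ^ N" .
  moreover have "Vcol n V j = N mod 2" unfolding Vcol_def N_def ..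
  ultimately show ?thesis by (cases "even N") (simp_all add: odd_iff_mod_2_eq_one)
qed

lemma col_sign_mult_self: "col_sign n V j * col_sign n V j = 1"
  unfolding col_sign_def prod.distrib[symmetric] by (intro prod.neutral) (simp add: bulb_sign_def)

lemma expectation_prod_col_sign:
  assumes "1 \<le> m" "m < n" "F \<subseteq> {1..n}"
  shows "measure_pmf.expectation (V_pmf n m) (\<lambda>V. \<Prod>j\<in>F. col_sign n V j)
    = (\<Prod>r\<in>{1..n} - {m, m+1}. lam n (card F) r)
        * ((lam n (card F) m + lam n (card F) (m+1)) / 2) ^ 2"
proof -
  let ?h = "\<lambda>r. measure_pmf.expectation (V_row_pmf n m r) (\<lambda>S. \<Prod>j\<in>F. bulb_sign j S)"
  have "measure_pmf.expectation (V_pmf n m) (\<lambda>V. \<Prod>j\<in>F. col_sign n V j)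
      = measure_pmf.expectation (Pi_pmf {1..n} {} (V_row_pmf n m))
          (\<lambda>V. \<Prod>r\<in>{1..n}. \<Prod>j\<in>F. bulb_sign j (V r))"
    unfolding V_pmf_eq_Pi_pmf[OF assms(1,2)] col_sign_def by (subst prod.swap) (rule refl)
  also have "\<dots> = (\<Prod>r\<in>{1..n}. ?h r)"
    using assms by (intro expectation_Pi_pmf_prod finite_set_pmf_V_row_pmf) auto
  also have "\<dots> = ?h m * ?h (m+1) * (\<Prod>r\<in>{1..n} - {m, m+1}. ?h r)"
  proof -
    have "(\<Prod>r\<in>{1..n}. ?h r) = ?h m * (\<Prod>r\<in>{1..n} - {m}. ?h r)"
      using assms by (intro prod.remove) auto
    also have "(\<Prod>r\<in>{1..n} - {m}. ?h r) = ?h (m+1) * (\<Prod>r\<in>{1..n} - {m} - {m+1}. ?h r)"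
      using assms by (intro prod.remove) auto
    also have "{1..n} - {m} - {m+1} = {1..n} - {m, m+1}" by auto
    finally show ?thesis by (simp only: mult.assoc)
  qed
  also have "\<dots> = ((lam n (card F) m + lam n (card F) (m+1)) / 2) ^ 2
                    * (\<Prod>r\<in>{1..n} - {m, m+1}. lam n (card F) r)"
    using assms
    by (simp add: V_row_pmf_def expectation_row_mix_pmf expectation_row_pmf_prod_bulb_sign
        power2_eq_square)
  finally show ?thesis by (simp only: mult.commute)
qed

lemma
  fixes M :: "'a pmf" and s :: "'i \<Rightarrow> 'a \<Rightarrow> real"
  assumes fin: "finite (set_pmf M)" "finite J"
    and sq: "\<And>j x. j \<in> J \<Longrightarrow> s j x * s j x = 1"
    and mean: "\<And>j. j \<in> J \<Longrightarrow> measure_pmf.expectation M (s j) = 0"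
    and cov: "\<And>j k. j \<in> J \<Longrightarrow> k \<in> J \<Longrightarrow> j \<noteq> k \<Longrightarrow> measure_pmf.expectation M (\<lambda>x. s j x * s k x) = c"
  shows expectation_sum_half_signs:
      "measure_pmf.expectation M (\<lambda>x. \<Sum>j\<in>J. (1 - s j x) / 2) = card J / 2"
    and variance_sum_half_signs:
      "measure_pmf.variance M (\<lambda>x. \<Sum>j\<in>J. (1 - s j x) / 2)
         = card J / 4 * (1 - c) + (card J)^2 / 4 * c"
proof -
  have int: "integrable (measure_pmf M) f" for f :: "'a \<Rightarrow> real"
    using fin(1) by (rule integrable_measure_pmf_finite)
  have sum_eq: "(\<Sum>j\<in>J. (1 - s j x) / 2) = card J / 2 - (\<Sum>j\<in>J. s j x) / 2" for x
    by (simp add: sum_subtractf sum_divide_distrib[symmetric] diff_divide_distrib)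
  show E: "measure_pmf.expectation M (\<lambda>x. \<Sum>j\<in>J. (1 - s j x) / 2) = card J / 2"
    using mean by (simp add: sum_eq Bochner_Integration.integral_sum[OF int] int)
  have row: "(\<Sum>k\<in>J. measure_pmf.expectation M (\<lambda>x. s j x * s k x)) = 1 + (card J - 1) * c"
    if "j \<in> J" for j
  proof -
    have "(\<Sum>k\<in>J. measure_pmf.expectation M (\<lambda>x. s j x * s k x))
        = measure_pmf.expectation M (\<lambda>x. s j x * s j x)
          + (\<Sum>k\<in>J - {j}. measure_pmf.expectation M (\<lambda>x. s j x * s k x))"
      using that fin(2) by (simp add: sum.remove)
    also have "\<dots> = 1 + (\<Sum>k\<in>J - {j}. c)"
    proof -
      have "measure_pmf.expectation M (\<lambda>x. s j x * s j x) = 1" using sq[OF that] by simp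
      moreover have "(\<Sum>k\<in>J - {j}. measure_pmf.expectation M (\<lambda>x. s j x * s k x)) = (\<Sum>k\<in>J - {j}. c)"
        using that by (intro sum.cong refl cov) auto
      ultimately show ?thesis by simp
    qed
    finally show ?thesis using that fin(2) by simp
  qed
  have square: "((\<Sum>j\<in>J. (1 - s j x) / 2) - card J / 2)^2 = (\<Sum>j\<in>J. \<Sum>k\<in>J. s j x * s k x) / 4"
    for x
    unfolding sum_eq sum_product[symmetric] by (simp add: power2_eq_square)
  have "measure_pmf.variance M (\<lambda>x. \<Sum>j\<in>J. (1 - s j x) / 2)
      = measure_pmf.expectation M (\<lambda>x. (\<Sum>j\<in>J. \<Sum>k\<in>J. s j x * s k x) / 4)"
    by (simp only: E square)
  also have "\<dots> = (\<Sum>j\<in>J. \<Sum>k\<in>J. measure_pmf.expectation M (\<lambda>x. s j x * s k x)) / 4"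
    by (simp add: Bochner_Integration.integral_sum[OF int] int)
  also have "\<dots> = (\<Sum>j\<in>J. 1 + (card J - 1) * c) / 4"
    using row by simp
  also have "\<dots> = card J / 4 * (1 - c) + (card J)^2 / 4 * c"
    by (cases "card J") (simp_all add: power2_eq_square field_simps)
  finally show "measure_pmf.variance M (\<lambda>x. \<Sum>j\<in>J. (1 - s j x) / 2)
      = card J / 4 * (1 - c) + (card J)^2 / 4 * c" .
qed

lemma expectation_col_sign:
  assumes "n = 2 * m + 1" "1 \<le> m" "j \<in> {1..n}"
  shows "measure_pmf.expectation (V_pmf n m) (\<lambda>V. col_sign n V j) = 0"
proof -
  have "lam n 1 m + lam n 1 (m+1) = 0"
    using assms(1) by (simp add: lam_def ffall_def field_simps)
  then show ?thesis
    using expectation_prod_col_sign[of m n "{j}"] assms by simp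
qed

lemma expectation_col_sign_mult:
  assumes "n = 2 * m + 1" "1 \<le> m" "j \<in> {1..n}" "k \<in> {1..n}" "j \<noteq> k"
  shows "measure_pmf.expectation (V_pmf n m) (\<lambda>V. col_sign n V j * col_sign n V k) = lam_bar n m"
  using expectation_prod_col_sign[of m n "{j, k}"] assms by (simp add: lam_bar_def numeral_2_eq_2)

lemma finite_set_pmf_V_pmf:
  assumes "1 \<le> m" "m < n"
  shows "finite (set_pmf (V_pmf n m))"
proof -
  have "finite (PiE_dflt {1..n} {} (set_pmf \<circ> V_row_pmf n m))"
    using assms by (intro finite_PiE_dflt) (auto intro: finite_set_pmf_V_row_pmf)
  then show ?thesis by (simp add: V_pmf_eq_Pi_pmf[OF assms] set_Pi_pmf)
qed

lemma Vtot_eq_sum_col_sign: "real (Vtot n V) = (\<Sum>j\<in>{1..n}. (1 - col_sign n V j) / 2)"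
  by (simp add: Vtot_def Vcol_eq_col_sign)

lemma pmf_row_mix_pmf:
  "pmf (row_mix_pmf n m) S = 1/2 * pmf (row_pmf n m) S + 1/2 * pmf (row_pmf n (m+1)) S"
  by (simp add: row_mix_pmf_def pmf_bind)

lemma map_row_V_pmf:
  assumes "1 \<le> m" "m < n" "r \<in> {m, m+1}"
  shows "map_pmf (\<lambda>V. V r) (V_pmf n m) = row_mix_pmf n m"
  using assms by (auto simp: V_pmf_eq_Pi_pmf Pi_pmf_component V_row_pmf_def)

lemma prob_Vcol_eq_1:
  assumes "n = 2 * m + 1" "1 \<le> m" "j \<in> {1..n}"
  shows "measure_pmf.prob (V_pmf n m) {V. Vcol n V j = 1} = 1/2"
proof -
  have fin: "finite (set_pmf (V_pmf n m))" using assms by (intro finite_set_pmf_V_pmf) auto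
  have ind: "indicator {V. Vcol n V j = 1} = (\<lambda>V. real (Vcol n V j))"
    by (auto simp: indicator_def Vcol_def)
  have "measure_pmf.prob (V_pmf n m) {V. Vcol n V j = 1}
      = measure_pmf.expectation (V_pmf n m) (indicator {V. Vcol n V j = 1})"
    by simp
  also have "\<dots> = measure_pmf.expectation (V_pmf n m) (\<lambda>V. (1 - col_sign n V j) / 2)"
    unfolding ind Vcol_eq_col_sign ..
  also have "\<dots> = (1 - measure_pmf.expectation (V_pmf n m) (\<lambda>V. col_sign n V j)) / 2"
    using Bochner_Integration.integral_diff[OF integrable_measure_pmf_finite[OF fin]
        integrable_measure_pmf_finite[OF fin], of "\<lambda>_. 1" "\<lambda>V. col_sign n V j"]
    by simp
  also have "\<dots> = 1/2"
    using expectation_col_sign[OF assms] by simp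
  finally show ?thesis .
qed

theorem lemma3p4:
  fixes n m :: nat
  assumes "n = 2 * m + 1" and "m \<ge> 1"
  shows "prob_space.indep_vars (measure_pmf (V_pmf n m)) (\<lambda>_. count_space UNIV)
            (\<lambda>r V. V r) {1..n}
    \<and> (\<forall>r \<in> {m, m+1}. \<forall>S.
            pmf (map_pmf (\<lambda>V. V r) (V_pmf n m)) S
              = 1/2 * pmf (row_pmf n m) S + 1/2 * pmf (row_pmf n (m+1)) S)
    \<and> (\<forall>j \<in> {1..n}. measure_pmf.prob (V_pmf n m) {V. Vcol n V j = 1} = 1/2)
    \<and> measure_pmf.expectation (V_pmf n m) (\<lambda>V. real (Vtot n V)) = real n / 2
    \<and> measure_pmf.variance (V_pmf n m) (\<lambda>V. real (Vtot n V))
            = real n / 4 * (1 - lam_bar n m) + (real n)^2 / 4 * lam_bar n m"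
proof -
  have m: "1 \<le> m" "m < n" using assms by auto
  have fin: "finite (set_pmf (V_pmf n m))" by (rule finite_set_pmf_V_pmf[OF m])
  have "prob_space.indep_vars (measure_pmf (V_pmf n m)) (\<lambda>_. count_space UNIV) (\<lambda>r V. V r) {1..n}"
    unfolding V_pmf_eq_Pi_pmf[OF m] by (rule indep_vars_Pi_pmf) simp
  moreover have "measure_pmf.expectation (V_pmf n m) (\<lambda>V. real (Vtot n V)) = real n / 2"
    "measure_pmf.variance (V_pmf n m) (\<lambda>V. real (Vtot n V))
            = real n / 4 * (1 - lam_bar n m) + (real n)^2 / 4 * lam_bar n m"
    using expectation_sum_half_signs[where s = "\<lambda>j V. col_sign n V j", OF fin finite_atLeastAtMost
          col_sign_mult_self expectation_col_sign[OF assms] expectation_col_sign_mult[OF assms]]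
      variance_sum_half_signs[where s = "\<lambda>j V. col_sign n V j", OF fin finite_atLeastAtMost
          col_sign_mult_self expectation_col_sign[OF assms] expectation_col_sign_mult[OF assms]]
    by (simp_all add: Vtot_eq_sum_col_sign)
  ultimately show ?thesis
    using map_row_V_pmf[OF m] pmf_row_mix_pmf prob_Vcol_eq_1[OF assms] by simp
qed

end
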